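(* Let $\Lambda$ be an ordinal with $2\leq\Lambda\leq\omega$. For each $n\in\Lambda$ let $\delta_n$ be a nonempty family of nonempty subsets of $\omega$ with $\bigcap\delta_n=\varnothing$. Suppose that $\delta_0$ has the finite intersection property and that for each $n\in\Lambda\setminus\{0\}$ there is $\gamma_n\subseteq\mathcal{P}(\omega)$ with $|\gamma_n|\leq\omega$, $\gamma_n$ having the finite intersection property, and $\gamma_n\gg\delta_n$. Then there is a sequence $\langle\alpha_n\rangle_{n\in\Lambda}$ of strictly increasing functions $\alpha_n:\omega\to\omega$ such that: if $k\in\Lambda$ and $A_i\in\{\alpha_i[D]: D\in\delta_i\}$ for all $i\leq k$, then $\bigcap_{i\leq k}A_i$ is infinite.
   Context: Ordinals are von Neumann ordinals ($\Lambda=\{0,1,\dots\}$). A family has the finite intersection property if every finite nonempty subfamily has nonempty intersection. For families $\gamma,\delta$ of sets, $\gamma\gg\delta$ means: for every nonempty $D\in\delta$ there is a nonempty $G\in\gamma$ with $G\subseteq D$. $\alpha[D]$ denotes the image of $D$ under $\alpha$. *)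

theory Defs
  imports Main "HOL-Library.Extended_Nat" "HOL-Library.Countable_Set"
begin

definition fip :: "'a set set \<Rightarrow> bool" where
  "fip F \<longleftrightarrow> (\<forall>S. S \<subseteq> F \<and> finite S \<and> S \<noteq> {} \<longrightarrow> \<Inter>S \<noteq> {})"

definition refines :: "'a set set \<Rightarrow> 'a set set \<Rightarrow> bool" (infix "\<ggreater>" 50) where
  "\<gamma> \<ggreater> \<delta> \<longleftrightarrow> (\<forall>D\<in>\<delta>. D \<noteq> {} \<longrightarrow> (\<exists>G\<in>\<gamma>. G \<noteq> {} \<and> G \<subseteq> D))"

end

theory Submission
  imports Defs
begin

text \<open>
  For \<open>n \<ge> 1\<close> the countable family \<open>\<gamma>\<^sub>n\<close> has a strictly increasing pseudo-intersection
  \<open>h\<^sub>n\<close>, which eventually lies in every member of \<open>\<delta>\<^sub>n\<close>. Take a strictly increasing \<open>v\<close> that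
  grows fast enough to dominate all \<open>h\<^sub>n\<close> and to make the gaps \<open>v j - h\<^sub>n j\<close> nondecreasing;
  then \<open>\<alpha>\<^sub>n\<close> can be chosen strictly increasing with \<open>\<alpha>\<^sub>n (h\<^sub>n j) = v j\<close> for \<open>j \<ge> n\<close>, and
  \<open>\<alpha>\<^sub>0 = v\<close>. Given \<open>D\<^sub>i \<in> \<delta>\<^sub>i\<close>, all sufficiently large \<open>j \<in> D\<^sub>0\<close> give \<open>v j \<in> \<alpha>\<^sub>i[D\<^sub>i]\<close> for
  every \<open>i \<le> k\<close>, and there are infinitely many such \<open>j\<close> since \<open>D\<^sub>0\<close> is infinite.
\<close>

lemma fip_Inter_empty_imp_infinite:
  assumes "fip F" "\<Inter>F = {}" "S \<subseteq> F" "finite S" "S \<noteq> {}"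
  shows "infinite (\<Inter>S)"
proof
  assume fin: "finite (\<Inter>S)"
  have "\<forall>x\<in>\<Inter>S. \<exists>E\<in>F. x \<notin> E" using assms(2) by blast
  then obtain E where E: "\<And>x. x \<in> \<Inter>S \<Longrightarrow> E x \<in> F \<and> x \<notin> E x" by metis
  define T where "T = S \<union> E ` \<Inter>S"
  have "T \<subseteq> F" using E assms(3) unfolding T_def by blast
  moreover have "finite T" "T \<noteq> {}" using fin assms(4,5) unfolding T_def by simp_all
  moreover have "\<Inter>T = {}"
    using E unfolding T_def by blast
  ultimately show False using assms(1) unfolding fip_def by blast
qed

lemma refines_Inter_empty:
  assumes "\<gamma> \<ggreater> \<delta>" "\<And>D. D \<in> \<delta> \<Longrightarrow> D \<noteq> {}" "\<Inter>\<delta> = {}"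
  shows "\<Inter>\<gamma> = {}"
proof -
  have "\<Inter>\<gamma> \<subseteq> \<Inter>\<delta>"
  proof (rule Inter_greatest)
    fix D assume "D \<in> \<delta>"
    then obtain G where "G \<in> \<gamma>" "G \<subseteq> D"
      using assms(1,2) unfolding refines_def by metis
    then show "\<Inter>\<gamma> \<subseteq> D" by blast
  qed
  with assms(3) show ?thesis by simp
qed

lemma strict_mono_choice:
  fixes H :: "nat \<Rightarrow> nat set"
  assumes "\<And>j. infinite (H j)"
  obtains h where "strict_mono h" "\<And>j. h j \<in> H j"
proof -
  have above: "\<exists>y. y \<in> H j \<and> x < y" for j x
    using assms[of j] unfolding infinite_nat_iff_unbounded by blast
  have "\<exists>h. \<forall>j. h j \<in> H j \<and> h j < h (Suc j)"
    using dependent_nat_choice[of "\<lambda>j x. x \<in> H j" "\<lambda>_ x y. x < y"] above by blast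
  then show ?thesis using that by (auto simp: strict_mono_Suc_iff)
qed

lemma countable_fip_pseudo_intersection:
  fixes \<gamma> :: "nat set set"
  assumes "countable \<gamma>" "fip \<gamma>" "\<Inter>\<gamma> = {}"
  obtains h where "strict_mono h" "\<And>G. G \<in> \<gamma> \<Longrightarrow> \<forall>\<^sub>F j in sequentially. h j \<in> G"
proof -
  have "\<gamma> \<noteq> {}" using assms(3) by auto
  define H where "H j = \<Inter>(from_nat_into \<gamma> ` {..j})" for j
  have "infinite (H j)" for j
    unfolding H_def using assms(2,3) from_nat_into[OF \<open>\<gamma> \<noteq> {}\<close>]
    by (intro fip_Inter_empty_imp_infinite) auto
  then obtain h where h: "strict_mono h" "\<And>j. h j \<in> H j"
    using strict_mono_choice[of H] by blast
  have "\<forall>\<^sub>F j in sequentially. h j \<in> G" if G: "G \<in> \<gamma>" for G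
  proof -
    obtain m where "from_nat_into \<gamma> m = G"
      using from_nat_into_surj[OF assms(1) G] by blast
    then have "h j \<in> G" if "m \<le> j" for j
      using h(2)[of j] that unfolding H_def by auto
    then show ?thesis unfolding eventually_sequentially by blast
  qed
  with h(1) show ?thesis by (rule that)
qed

lemma refines_pseudo_intersection:
  fixes \<gamma> \<delta> :: "nat set set"
  assumes "countable \<gamma>" "fip \<gamma>" "\<gamma> \<ggreater> \<delta>"
    and "\<And>D. D \<in> \<delta> \<Longrightarrow> D \<noteq> {}" "\<Inter>\<delta> = {}"
  obtains h where "strict_mono h" "\<And>D. D \<in> \<delta> \<Longrightarrow> \<forall>\<^sub>F j in sequentially. h j \<in> D"
proof -
  obtain h where h: "strict_mono h" "\<And>G. G \<in> \<gamma> \<Longrightarrow> \<forall>\<^sub>F j in sequentially. h j \<in> G"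
    using countable_fip_pseudo_intersection[OF assms(1,2) refines_Inter_empty[OF assms(3-5)]]
    by blast
  have "\<forall>\<^sub>F j in sequentially. h j \<in> D" if D: "D \<in> \<delta>" for D
  proof -
    obtain G where "G \<in> \<gamma>" "G \<subseteq> D"
      using assms(3,4) D unfolding refines_def by metis
    from h(2)[OF \<open>G \<in> \<gamma>\<close>] show ?thesis
      by (rule eventually_mono) (use \<open>G \<subseteq> D\<close> in blast)
  qed
  with h(1) show ?thesis by (rule that)
qed

lemma refines_pseudo_intersections:
  fixes \<delta> :: "'i \<Rightarrow> nat set set"
  assumes "\<And>n. P n \<Longrightarrow> \<exists>\<gamma>. countable \<gamma> \<and> fip \<gamma> \<and> \<gamma> \<ggreater> \<delta> n"
    and "\<And>n D. P n \<Longrightarrow> D \<in> \<delta> n \<Longrightarrow> D \<noteq> {}" "\<And>n. P n \<Longrightarrow> \<Inter>(\<delta> n) = {}"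
  obtains h where "\<And>n. strict_mono (h n)"
    "\<And>n D. P n \<Longrightarrow> D \<in> \<delta> n \<Longrightarrow> \<forall>\<^sub>F j in sequentially. h n j \<in> D"
proof -
  have "\<exists>g. strict_mono g \<and> (P n \<longrightarrow> (\<forall>D\<in>\<delta> n. \<forall>\<^sub>F j in sequentially. g j \<in> D))" for n
  proof (cases "P n")
    case True
    then obtain \<gamma> where "countable \<gamma>" "fip \<gamma>" "\<gamma> \<ggreater> \<delta> n"
      using assms(1) by blast
    then obtain g where "strict_mono g" "\<And>D. D \<in> \<delta> n \<Longrightarrow> \<forall>\<^sub>F j in sequentially. g j \<in> D"
      by (rule refines_pseudo_intersection) (use assms(2,3) True in auto)
    then show ?thesis by blast
  qed (use strict_mono_id in blast)
  then have "\<forall>n. \<exists>g. strict_mono g \<and> (P n \<longrightarrow> (\<forall>D\<in>\<delta> n. \<forall>\<^sub>F j in sequentially. g j \<in> D))"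
    by blast
  then obtain h where "\<forall>n. strict_mono (h n) \<and> (P n \<longrightarrow> (\<forall>D\<in>\<delta> n. \<forall>\<^sub>F j in sequentially. h n j \<in> D))"
    by (rule choice[THEN exE])
  with that show ?thesis by blast
qed

text \<open>
  The interpolating map is \<open>x \<mapsto> x + d x\<close>, where \<open>d x\<close> is the gap \<open>b j - a j\<close> at the
  largest admissible \<open>j\<close> with \<open>a j \<le> x\<close>; as the gaps are nondecreasing this is a maximum.
\<close>

lemma strict_mono_interpolation:
  fixes a b :: "nat \<Rightarrow> nat"
  assumes "strict_mono a" "\<And>j. i \<le> j \<Longrightarrow> a j \<le> b j"
    and gaps: "\<And>j. i \<le> j \<Longrightarrow> b j - a j \<le> b (Suc j) - a (Suc j)"
  obtains f where "strict_mono f" "\<And>s. i \<le> s \<Longrightarrow> f (a s) = b s"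
proof -
  define d where "d x = Max (insert 0 ((\<lambda>j. b j - a j) ` {j. i \<le> j \<and> a j \<le> x}))" for x
  have fin: "finite {j. i \<le> j \<and> a j \<le> x}" for x
    by (rule finite_subset[of _ "{..x}"]) (auto intro: le_trans[OF seq_suble[OF assms(1)]])
  have "d x \<le> d y" if "x \<le> y" for x y
    unfolding d_def using fin[of y] that by (intro Max_mono) auto
  then have mono: "strict_mono (\<lambda>x. x + d x)"
    by (intro strict_monoI) (simp add: add_less_le_mono)
  have "b j - a j \<le> b s - a s" if "i \<le> j" "j \<le> s" for j s
    using that(2) by (induction rule: dec_induct) (use gaps that(1) le_trans in blast)+
  then have "d (a s) = b s - a s" if "i \<le> s" for s
    unfolding d_def using that assms(1)
    by (intro Max_eqI) (auto simp: fin strict_mono_less_eq)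
  then have "a s + d (a s) = b s" if "i \<le> s" for s
    using that assms(2)[OF that] by simp
  with mono show ?thesis using that by blast
qed

lemma strict_mono_sequences_align:
  fixes h :: "nat \<Rightarrow> nat \<Rightarrow> nat"
  assumes "\<And>n. strict_mono (h n)"
  obtains v :: "nat \<Rightarrow> nat" and \<alpha> where "strict_mono v" "\<And>n. strict_mono (\<alpha> n)"
    "\<And>n s. n \<le> s \<Longrightarrow> \<alpha> n (h n s) = v s"
proof -
  define M where "M j = Max ((\<lambda>n. h n j) ` {..j})" for j
  define v where "v j = (\<Sum>t\<le>j. M t + 1)" for j
  have v_Suc: "v (Suc j) = v j + M (Suc j) + 1" for j
    unfolding v_def by simp
  have h_le_M: "h n j \<le> M j" if "n \<le> j" for n j
    unfolding M_def using that by (intro Max_ge) auto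
  have "M j + 1 \<le> v j" for j
    unfolding v_def using member_le_sum[of j "{..j}" "\<lambda>t. M t + 1"] by simp
  then have h_le_v: "h n j \<le> v j" if "n \<le> j" for n j
    using h_le_M[OF that] by (meson add_leD1 le_trans)
  have gaps: "v j - h n j \<le> v (Suc j) - h n (Suc j)" if "n \<le> j" for n j
    using h_le_M[of n "Suc j"] that unfolding v_Suc by simp
  have "\<exists>f. strict_mono f \<and> (\<forall>s. n \<le> s \<longrightarrow> f (h n s) = v s)" for n
    using strict_mono_interpolation[of "h n" n v] assms h_le_v gaps by metis
  then have "\<forall>n. \<exists>f. strict_mono f \<and> (\<forall>s. n \<le> s \<longrightarrow> f (h n s) = v s)"
    by blast
  then obtain \<alpha> where \<alpha>: "\<forall>n. strict_mono (\<alpha> n) \<and> (\<forall>s. n \<le> s \<longrightarrow> \<alpha> n (h n s) = v s)"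
    by (auto dest!: choice)
  have "strict_mono v" by (simp add: strict_mono_Suc_iff v_Suc)
  with \<alpha> show ?thesis using that[of v \<alpha>] by blast
qed

lemma eventually_in_image_if_aligned:
  assumes "\<And>s. n \<le> s \<Longrightarrow> \<alpha> (h s) = v s" "\<forall>\<^sub>F j in sequentially. h j \<in> D"
  shows "\<forall>\<^sub>F j in sequentially. v j \<in> \<alpha> ` D"
  using eventually_conj[OF assms(2) eventually_ge_at_top[of n]]
proof (rule eventually_mono)
  fix j assume "h j \<in> D \<and> n \<le> j"
  with assms(1) show "v j \<in> \<alpha> ` D" by (metis image_eqI)
qed

lemma infinite_image_Int_eventually:
  fixes v :: "nat \<Rightarrow> 'a"
  assumes "inj v" "infinite D" "finite I" "\<And>i. i \<in> I \<Longrightarrow> \<forall>\<^sub>F j in sequentially. v j \<in> A i"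
  shows "infinite (v ` D \<inter> (\<Inter>i\<in>I. A i))"
proof -
  have "\<exists>\<^sub>F j in sequentially. j \<in> D"
    using assms(2) by (simp add: frequently_cofinite flip: cofinite_eq_sequentially)
  moreover have "\<forall>\<^sub>F j in sequentially. \<forall>i\<in>I. v j \<in> A i"
    using assms(4) by (intro eventually_ball_finite[OF assms(3)]) blast
  ultimately have "\<exists>\<^sub>F j in sequentially. (\<forall>i\<in>I. v j \<in> A i) \<and> j \<in> D"
    by (rule frequently_eventually_conj)
  then have "infinite {j \<in> D. \<forall>i\<in>I. v j \<in> A i}"
    by (simp add: frequently_cofinite conj_commute flip: cofinite_eq_sequentially)
  then have "infinite (v ` {j \<in> D. \<forall>i\<in>I. v j \<in> A i})"
    using assms(1) by (simp add: finite_image_iff inj_on_subset)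
  then show ?thesis by (rule infinite_super[rotated]) blast
qed

lemma infinite_Inter_aligned_images:
  fixes v :: "nat \<Rightarrow> 'a" and \<alpha> :: "nat \<Rightarrow> nat \<Rightarrow> 'a"
  assumes "inj v" "\<alpha> 0 = v" "infinite (D 0)"
    and "\<And>i s. i \<in> {1..k} \<Longrightarrow> i \<le> s \<Longrightarrow> \<alpha> i (h i s) = v s"
    and "\<And>i. i \<in> {1..k} \<Longrightarrow> \<forall>\<^sub>F j in sequentially. h i j \<in> D i"
  shows "infinite (\<Inter>i\<le>k. \<alpha> i ` D i)"
proof -
  have "\<forall>\<^sub>F j in sequentially. v j \<in> \<alpha> i ` D i" if "i \<in> {1..k}" for i
    using eventually_in_image_if_aligned[of i "\<alpha> i" "h i" v "D i"] assms(4,5) that by blast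
  then have "infinite (v ` D 0 \<inter> (\<Inter>i\<in>{1..k}. \<alpha> i ` D i))"
    using assms(1,3) by (intro infinite_image_Int_eventually) auto
  moreover have "{..k} = insert 0 {1..k}" by auto
  ultimately show ?thesis using assms(2) by simp
qed

theorem lemma13:
  fixes \<Lambda> :: enat and \<delta> :: "nat \<Rightarrow> nat set set"
  assumes "2 \<le> \<Lambda>"
    and "\<And>n. enat n < \<Lambda> \<Longrightarrow> \<delta> n \<noteq> {}"
    and "\<And>n D. enat n < \<Lambda> \<Longrightarrow> D \<in> \<delta> n \<Longrightarrow> D \<noteq> {}"
    and "\<And>n. enat n < \<Lambda> \<Longrightarrow> \<Inter>(\<delta> n) = {}"
    and "fip (\<delta> 0)"
    and "\<And>n. enat n < \<Lambda> \<Longrightarrow> n \<noteq> 0 \<Longrightarrow>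
           \<exists>\<gamma> :: nat set set. countable \<gamma> \<and> fip \<gamma> \<and> \<gamma> \<ggreater> \<delta> n"
  shows "\<exists>\<alpha> :: nat \<Rightarrow> nat \<Rightarrow> nat.
           (\<forall>n. enat n < \<Lambda> \<longrightarrow> strict_mono (\<alpha> n)) \<and>
           (\<forall>k A. enat k < \<Lambda> \<longrightarrow> (\<forall>i\<le>k. A i \<in> (\<lambda>D. \<alpha> i ` D) ` \<delta> i)
                   \<longrightarrow> infinite (\<Inter>i\<le>k. A i))"
proof -
  obtain h where h: "\<And>n. strict_mono (h n)" and h_ev:
    "\<And>n D. 0 < n \<and> enat n < \<Lambda> \<Longrightarrow> D \<in> \<delta> n \<Longrightarrow> \<forall>\<^sub>F j in sequentially. h n j \<in> D"
    using refines_pseudo_intersections[of "\<lambda>n. 0 < n \<and> enat n < \<Lambda>" \<delta>] assms(3,4,6) by blast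
  obtain v :: "nat \<Rightarrow> nat" and \<alpha> where v: "strict_mono v" and \<alpha>: "\<And>n. strict_mono (\<alpha> n)"
    and \<alpha>_h: "\<And>n s. n \<le> s \<Longrightarrow> \<alpha> n (h n s) = v s"
    using strict_mono_sequences_align[of h, OF h] by blast
  define \<beta> where "\<beta> n = (if n = 0 then v else \<alpha> n)" for n
  show ?thesis
  proof (intro exI[of _ \<beta>] conjI allI impI)
    fix n show "strict_mono (\<beta> n)"
      unfolding \<beta>_def using v \<alpha> by simp
  next
    fix k A assume k: "enat k < \<Lambda>" and "\<forall>i\<le>k. A i \<in> (\<lambda>D. \<beta> i ` D) ` \<delta> i"
    then have "\<forall>i\<in>{..k}. \<exists>D. D \<in> \<delta> i \<and> A i = \<beta> i ` D"
      by auto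
    then obtain D where D: "\<forall>i\<in>{..k}. D i \<in> \<delta> i \<and> A i = \<beta> i ` D i"
      by (rule bchoice[THEN exE])
    have valid: "enat i < \<Lambda>" if "i \<le> k" for i
      using that by (intro order.strict_trans1[OF _ k]) simp
    have "infinite (D 0)"
      using fip_Inter_empty_imp_infinite[OF assms(5) assms(4)[OF valid[OF le0]], of "{D 0}"] D
      by simp
    then have "infinite (\<Inter>i\<le>k. \<beta> i ` D i)"
      using strict_mono_imp_inj_on[OF v] \<alpha>_h h_ev D valid
      by (intro infinite_Inter_aligned_images[of v]) (auto simp: \<beta>_def)
    moreover have "(\<Inter>i\<le>k. A i) = (\<Inter>i\<le>k. \<beta> i ` D i)"
      using D by (intro INF_cong) auto
    ultimately show "infinite (\<Inter>i\<le>k. A i)" by simp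
  qed
qed

end
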